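(* Let $0<a,b<1$, $f\ge3$, and let $\overline w_{m,n}$ be the array defined in the context. Then for all integers $1\le m<n$, $\overline w_{m,n}=\overline w_{n-1,m-1}$.
   Context: Let $r,y,z$ be indeterminates. For $c\in(0,1)$: $\omega_c:=1-(1-c)^2r^2y^2z^2$, $\tau_c:=1+(1-c)^2r^2z^2y(1-y)$, $x_c:=c^2z^2\tau_c^2$, $\beta_c:=1+z^2(c^2-(1-c)^2r^2(y^2+c^2(1-y)^2z^2))$; $w^*_0(c):=(\beta_c-\omega_c)/x_c$, $w^*_1(c):=1$, $w^*_{n+1}(c):=\beta_cw^*_n(c)-x_cw^*_{n-1}(c)$ ($n\ge1$). Also $\tau(a,b):=1+(1-a)(1-b)r^2z^2y(1-y)$, $x(a,b):=b^2z^2\tau(a,b)^2$, $x(b,a):=a^2z^2\tau(a,b)^2$, $\beta(a,b):=\beta_b-(b-a)b^2(1-b)r^2(1-y)^2z^4$, $\beta(b,a):=\beta_a-(a-b)a^2(1-a)r^2(1-y)^2z^4$. Define $\overline w_{m,m+1}=\overline w_{m+1,m}:=1$ ($m\ge0$), and for $n-m\ge2$ (indices $\ge0$): upward: $\overline w_{m,m+\ell}:=w^*_\ell(a)$ if $m+\ell\le f$, $:=w^*_\ell(b)$ if $f\le m$; $\overline w_{f-\ell,f+1}:=\frac{1-b}{1-a}w^*_{\ell+1}(a)+\frac{b-a}{1-a}w^*_\ell(a)$ ($1\le\ell\le f$); $\overline w_{m,f+2}:=\beta(a,b)\overline w_{m,f+1}-x(a,b)\overline w_{m,f}$ ($m\le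 f-1$); $\overline w_{m,f+j+1}:=\beta_b\overline w_{m,f+j}-x_b\overline w_{m,f+j-1}$ ($m\le f-1$, $j\ge2$). Downward: $\overline w_{m+\ell,m}:=w^*_\ell(a)$ if $m+\ell\le f-1$, $:=w^*_\ell(b)$ if $f-1\le m$; $\overline w_{f+j,f-2}:=\frac{1-a}{1-b}w^*_{j+2}(b)+\frac{a-b}{1-b}w^*_{j+1}(b)$ ($j\ge0$); $\overline w_{n,f-3}:=\beta(b,a)\overline w_{n,f-2}-x(b,a)\overline w_{n,f-1}$ ($n\ge f$); $\overline w_{n,f-\ell-2}:=\beta_a\overline w_{n,f-\ell-1}-x_a\overline w_{n,f-\ell}$ ($n\ge f$, $\ell\ge2$). *)

theory Defs
  imports Main "HOL.Real"
begin

(* The indeterminates r, y, z are modelled as real numbers. *)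

definition omega_c :: "real \<Rightarrow> real \<Rightarrow> real \<Rightarrow> real \<Rightarrow> real" where
  "omega_c c r y z = 1 - (1 - c)^2 * r^2 * y^2 * z^2"

definition tau_c :: "real \<Rightarrow> real \<Rightarrow> real \<Rightarrow> real \<Rightarrow> real" where
  "tau_c c r y z = 1 + (1 - c)^2 * r^2 * z^2 * y * (1 - y)"

definition x_c :: "real \<Rightarrow> real \<Rightarrow> real \<Rightarrow> real \<Rightarrow> real" where
  "x_c c r y z = c^2 * z^2 * (tau_c c r y z)^2"

definition beta_c :: "real \<Rightarrow> real \<Rightarrow> real \<Rightarrow> real \<Rightarrow> real" where
  "beta_c c r y z = 1 + z^2 * (c^2 - (1 - c)^2 * r^2 * (y^2 + c^2 * (1 - y)^2 * z^2))"

fun wstar :: "real \<Rightarrow> real \<Rightarrow> real \<Rightarrow> real \<Rightarrow> nat \<Rightarrow> real" where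
  "wstar c r y z 0 = (beta_c c r y z - omega_c c r y z) / x_c c r y z"
| "wstar c r y z (Suc 0) = 1"
| "wstar c r y z (Suc (Suc n)) =
     beta_c c r y z * wstar c r y z (Suc n) - x_c c r y z * wstar c r y z n"

definition tau2 :: "real \<Rightarrow> real \<Rightarrow> real \<Rightarrow> real \<Rightarrow> real \<Rightarrow> real" where
  "tau2 a b r y z = 1 + (1 - a) * (1 - b) * r^2 * z^2 * y * (1 - y)"

(* x(a,b) = b^2 z^2 tau(a,b)^2; then x(b,a) = x2 b a = a^2 z^2 tau(a,b)^2 since tau is symmetric *)
definition x2 :: "real \<Rightarrow> real \<Rightarrow> real \<Rightarrow> real \<Rightarrow> real \<Rightarrow> real" where
  "x2 a b r y z = b^2 * z^2 * (tau2 a b r y z)^2"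

definition beta2 :: "real \<Rightarrow> real \<Rightarrow> real \<Rightarrow> real \<Rightarrow> real \<Rightarrow> real" where
  "beta2 a b r y z = beta_c b r y z - (b - a) * b^2 * (1 - b) * r^2 * (1 - y)^2 * z^4"

(* wup a b f r y z m i = wbar_{m, f+1+i}  for m \<le> f-1.
   Uses wbar_{m,f} = w*_{f-m}(a) (given by the first upward clause since f \<le> f). *)
fun wup :: "real \<Rightarrow> real \<Rightarrow> nat \<Rightarrow> real \<Rightarrow> real \<Rightarrow> real \<Rightarrow> nat \<Rightarrow> nat \<Rightarrow> real" where
  "wup a b f r y z m 0 =
     (1 - b) / (1 - a) * wstar a r y z (f - m + 1) + (b - a) / (1 - a) * wstar a r y z (f - m)"
| "wup a b f r y z m (Suc 0) =
     beta2 a b r y z * wup a b f r y z m 0 - x2 a b r y z * wstar a r y z (f - m)"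
| "wup a b f r y z m (Suc (Suc i)) =
     beta_c b r y z * wup a b f r y z m (Suc i) - x_c b r y z * wup a b f r y z m i"

(* wdn a b f r y z p k = wbar_{p, f-2-k}  for p \<ge> f.
   Uses wbar_{p,f-1} = w*_{p-f+1}(b) (given by the second downward clause since f-1 \<le> f-1). *)
fun wdn :: "real \<Rightarrow> real \<Rightarrow> nat \<Rightarrow> real \<Rightarrow> real \<Rightarrow> real \<Rightarrow> nat \<Rightarrow> nat \<Rightarrow> real" where
  "wdn a b f r y z p 0 =
     (1 - a) / (1 - b) * wstar b r y z (p - f + 2) + (a - b) / (1 - b) * wstar b r y z (p - f + 1)"
| "wdn a b f r y z p (Suc 0) =
     beta2 b a r y z * wdn a b f r y z p 0 - x2 b a r y z * wstar b r y z (p - f + 1)"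
| "wdn a b f r y z p (Suc (Suc k)) =
     beta_c a r y z * wdn a b f r y z p (Suc k) - x_c a r y z * wdn a b f r y z p k"

(* The array \<overline>w_{m,n} (indices \<ge> 0). The diagonal m = n is not defined in the paper;
   it is set to 0 here and never used. *)
definition wbar :: "real \<Rightarrow> real \<Rightarrow> nat \<Rightarrow> real \<Rightarrow> real \<Rightarrow> real \<Rightarrow> nat \<Rightarrow> nat \<Rightarrow> real" where
  "wbar a b f r y z m n =
    (if n = m + 1 \<or> m = n + 1 then 1
     else if m < n then
       (if n \<le> f then wstar a r y z (n - m)
        else if f \<le> m then wstar b r y z (n - m)
        else wup a b f r y z m (n - (f + 1)))
     else if n < m then
       (if m \<le> f - 1 then wstar a r y z (m - n)
        else if f - 1 \<le> n then wstar b r y z (m - n)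
        else wdn a b f r y z m (f - 2 - n))
     else 0)"

end

theory Submission
  imports Defs
begin

text \<open>Away from the threshold f both index pairs lie in a region governed by a single
  sequence w*(a) or w*(b), and the transposition only reflects that w-bar depends on n - m there.
  For a pair straddling f, w-bar(m,n) comes from the upward recurrence and w-bar(n-1,m-1) from the
  downward one. Indexed by k = f-1-m and i = n-f-1, both obey the w*(a)-recurrence in k and the
  w*(b)-recurrence in i (each inherits one of the two from the w* sequence it is built from), so
  they coincide once they agree at the four corners k, i \<in> {0,1}; these are polynomial
  identities in r, y, z after clearing the denominators 1-a and 1-b.\<close>

lemma linear_recurrence_eq:
  fixes u v :: "nat \<Rightarrow> 'a::comm_ring"
  assumes u: "\<And>k. Suc (Suc k) \<le> n \<Longrightarrow> u (Suc (Suc k)) = p * u (Suc k) - q * u k"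
    and v: "\<And>k. Suc (Suc k) \<le> n \<Longrightarrow> v (Suc (Suc k)) = p * v (Suc k) - q * v k"
    and "u 0 = v 0" and "u 1 = v 1"
  shows "u n = v n"
proof -
  have "j \<le> n \<Longrightarrow> u j = v j" for j
  proof (induction j rule: less_induct)
    case (less j)
    consider "j = 0" | "j = 1" | k where "j = Suc (Suc k)"
      by (metis One_nat_def not0_implies_Suc)
    then show ?case
    proof cases
      case 3
      then show ?thesis using less u v by simp
    qed (use assms in simp_all)
  qed
  then show ?thesis by simp
qed

lemma wstar_2: "x_c c r y z \<noteq> 0 \<Longrightarrow> wstar c r y z 2 = omega_c c r y z"
  by (simp add: numeral_2_eq_2)

lemma wstar_3:
  "x_c c r y z \<noteq> 0 \<Longrightarrow> wstar c r y z 3 = beta_c c r y z * omega_c c r y z - x_c c r y z"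
  by (simp add: numeral_3_eq_3)

lemma wup_wdn_corner_identities:
  fixes a b r y z :: real
  assumes "a \<noteq> 1" "b \<noteq> 1"
  shows "(1-b)/(1-a) * omega_c a r y z + (b-a)/(1-a) = (1-a)/(1-b) * omega_c b r y z + (a-b)/(1-b)"
    and "beta2 a b r y z * ((1-b)/(1-a) * omega_c a r y z + (b-a)/(1-a)) - x2 a b r y z
      = (1-a)/(1-b) * (beta_c b r y z * omega_c b r y z - x_c b r y z) + (a-b)/(1-b) * omega_c b r y z"
    and "(1-b)/(1-a) * (beta_c a r y z * omega_c a r y z - x_c a r y z) + (b-a)/(1-a) * omega_c a r y z
      = beta2 b a r y z * ((1-a)/(1-b) * omega_c b r y z + (a-b)/(1-b)) - x2 b a r y z"
    and "beta2 a b r y z * ((1-b)/(1-a) * (beta_c a r y z * omega_c a r y z - x_c a r y z)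
        + (b-a)/(1-a) * omega_c a r y z) - x2 a b r y z * omega_c a r y z
      = beta2 b a r y z * ((1-a)/(1-b) * (beta_c b r y z * omega_c b r y z - x_c b r y z)
        + (a-b)/(1-b) * omega_c b r y z) - x2 b a r y z * omega_c b r y z"
  using assms by (simp_all add: divide_simps)
    (unfold omega_c_def tau_c_def x_c_def beta_c_def tau2_def x2_def beta2_def; algebra)+

lemma wup_eq_wdn_corner:
  assumes "a \<noteq> 1" "b \<noteq> 1" "x_c a r y z \<noteq> 0" "x_c b r y z \<noteq> 0" "2 \<le> f" "k \<le> 1" "i \<le> 1"
  shows "wup a b f r y z (f - 1 - k) i = wdn a b f r y z (f + i) k"
proof -
  obtain d where d: "f = Suc (Suc d)" using assms(5) by (metis add_2_eq_Suc le_Suc_ex)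
  have "k = 0 \<or> k = 1" "i = 0 \<or> i = 1" using assms(6,7) by auto
  then show ?thesis
    using assms(3,4) wup_wdn_corner_identities[OF assms(1,2), of r y z] unfolding d
    by (elim disjE; simp add: wstar_2 wstar_3 divide_simps)
qed

lemma wup_first_index_rec:
  assumes "m + 2 \<le> f"
  shows "wup a b f r y z m i
    = beta_c a r y z * wup a b f r y z (m + 1) i - x_c a r y z * wup a b f r y z (m + 2) i"
proof -
  obtain d where f: "f = Suc (Suc (m + d))"
    using assms by (metis add_2_eq_Suc le_Suc_ex add.commute add_Suc)
  have top: "wup a b f r y z m 0
      = beta_c a r y z * wup a b f r y z (m + 1) 0 - x_c a r y z * wup a b f r y z (m + 2) 0"
    unfolding f by (simp add: Suc_diff_le algebra_simps)
  show ?thesis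
  proof (rule linear_recurrence_eq[where p = "beta_c b r y z" and q = "x_c b r y z"])
    show "wup a b f r y z m 1
      = beta_c a r y z * wup a b f r y z (m + 1) 1 - x_c a r y z * wup a b f r y z (m + 2) 1"
      using top unfolding f by (simp add: Suc_diff_le algebra_simps)
  qed (use top in \<open>simp_all add: algebra_simps\<close>)
qed

lemma wdn_first_index_rec:
  assumes "f \<le> p"
  shows "wdn a b f r y z (p + 2) k
    = beta_c b r y z * wdn a b f r y z (p + 1) k - x_c b r y z * wdn a b f r y z p k"
proof -
  obtain d where p: "p = f + d" using assms le_Suc_ex by blast
  have bottom: "wdn a b f r y z (p + 2) 0
      = beta_c b r y z * wdn a b f r y z (p + 1) 0 - x_c b r y z * wdn a b f r y z p 0"
    unfolding p by (simp add: algebra_simps)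
  show ?thesis
  proof (rule linear_recurrence_eq[where p = "beta_c a r y z" and q = "x_c a r y z"])
    show "wdn a b f r y z (p + 2) 1
      = beta_c b r y z * wdn a b f r y z (p + 1) 1 - x_c b r y z * wdn a b f r y z p 1"
      using bottom unfolding p by (simp add: algebra_simps)
  qed (use bottom in \<open>simp_all add: algebra_simps\<close>)
qed

lemma wup_eq_wdn:
  assumes "a \<noteq> 1" "b \<noteq> 1" "x_c a r y z \<noteq> 0" "x_c b r y z \<noteq> 0" "2 \<le> f" "k \<le> f - 1"
  shows "wup a b f r y z (f - 1 - k) i = wdn a b f r y z (f + i) k"
proof -
  have edge: "wup a b f r y z (f - 1 - k) j = wdn a b f r y z (f + j) k" if "j \<le> 1" for j
  proof (rule linear_recurrence_eq[where p = "beta_c a r y z" and q = "x_c a r y z"])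
    fix l assume "Suc (Suc l) \<le> k"
    then show "wup a b f r y z (f - 1 - Suc (Suc l)) j
      = beta_c a r y z * wup a b f r y z (f - 1 - Suc l) j - x_c a r y z * wup a b f r y z (f - 1 - l) j"
      using wup_first_index_rec[of "f - 1 - Suc (Suc l)" f] assms(6) by (simp add: Suc_diff_Suc)
  qed (use assms that wup_eq_wdn_corner in auto)
  show ?thesis
  proof (rule linear_recurrence_eq[where u = "\<lambda>i. wup a b f r y z (f - 1 - k) i"
        and v = "\<lambda>i. wdn a b f r y z (f + i) k" and p = "beta_c b r y z" and q = "x_c b r y z"])
    fix l
    show "wdn a b f r y z (f + Suc (Suc l)) k
      = beta_c b r y z * wdn a b f r y z (f + Suc l) k - x_c b r y z * wdn a b f r y z (f + l) k"
      using wdn_first_index_rec[of f "f + l"] by simp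
  qed (use edge in \<open>simp_all del: wup.simps(1,2) wdn.simps\<close>)
qed

lemma wbar_transpose_crossing:
  assumes "a \<noteq> 1" "b \<noteq> 1" "x_c a r y z \<noteq> 0" "x_c b r y z \<noteq> 0"
    and "Suc m < f" "f \<le> n" "n \<noteq> Suc m"
  shows "wbar a b f r y z (Suc m) (Suc n) = wbar a b f r y z n m"
proof -
  have "wbar a b f r y z (Suc m) (Suc n) = wup a b f r y z (Suc m) (n - f)"
    using assms by (simp add: wbar_def)
  also have "\<dots> = wdn a b f r y z n (f - 2 - m)"
    using wup_eq_wdn[of a b r y z f "f - 2 - m" "n - f"] assms by simp
  also have "\<dots> = wbar a b f r y z n m"
  proof -
    have "\<not> n \<le> f - 1" "\<not> f - 1 \<le> m"
      using assms by auto
    with assms show ?thesis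
      by (simp add: wbar_def del: wdn.simps)
  qed
  finally show ?thesis .
qed

lemma wbar_Suc_Suc_transpose:
  assumes "a \<noteq> 1" "b \<noteq> 1" "x_c a r y z \<noteq> 0" "x_c b r y z \<noteq> 0" "k < l"
  shows "wbar a b f r y z (Suc k) (Suc l) = wbar a b f r y z l k"
proof -
  consider "l = Suc k" | "l \<noteq> Suc k" "l < f" | "l \<noteq> Suc k" "f \<le> Suc k"
    | "l \<noteq> Suc k" "Suc k < f" "f \<le> l"
    by linarith
  then show ?thesis
  proof cases
    case 2
    then have "l \<le> f - 1" by simp
    with 2 \<open>k < l\<close> show ?thesis by (simp add: wbar_def del: wstar.simps)
  next
    case 3
    then have "f - 1 \<le> k" "\<not> l \<le> f - 1" using \<open>k < l\<close> by auto
    with 3 \<open>k < l\<close> show ?thesis by (simp add: wbar_def del: wstar.simps)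
  next
    case 4
    with assms show ?thesis by (intro wbar_transpose_crossing) auto
  qed (simp add: wbar_def)
qed

theorem lemma2:
  fixes a b r y z :: real and f :: nat
  assumes "0 < a" and "a < 1" and "0 < b" and "b < 1" and "f \<ge> 3"
    and "z \<noteq> 0" and "tau_c a r y z \<noteq> 0" and "tau_c b r y z \<noteq> 0"
  shows "\<forall>m n. 1 \<le> m \<and> m < n \<longrightarrow> wbar a b f r y z m n = wbar a b f r y z (n - 1) (m - 1)"
proof (intro allI impI)
  fix m n :: nat
  assume "1 \<le> m \<and> m < n"
  then obtain k l where m: "m = Suc k" and n: "n = Suc l" and "k < l"
    by (metis Suc_le_D Suc_less_SucD gr0_conv_Suc less_trans zero_less_one order_less_le_trans)
  have "x_c a r y z \<noteq> 0" "x_c b r y z \<noteq> 0"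
    using assms by (simp_all add: x_c_def)
  with assms \<open>k < l\<close> show "wbar a b f r y z m n = wbar a b f r y z (n - 1) (m - 1)"
    unfolding m n by (simp add: wbar_Suc_Suc_transpose)
qed

end
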